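(* Let $J$ be a stable monomial ideal of $R=k[x_1,\dots,x_n]$ and let $d\ge1$. Let $T_1,\ldots,T_r$ be the monomials which form a $k$-basis of $\left((J:x_n)/J\right)_{d-1}$ (i.e. the monomials of degree $d-1$ in $(J:x_n)\setminus J$). Then $$\{x_nT_1,\ldots,x_nT_r\}=\{T\in \mathcal G(J)_d \mid x_n \text{ divides } T\}.$$ In particular $\dim_k \left((J:x_n)/J\right)_{d-1}= |\{T\in \mathcal G(J)_d \mid x_n\text{ divides } T\}|$.
   Context: For a monomial $u=x_1^{a_1}\cdots x_n^{a_n}$, $m(u)=\max\{j: a_j>0\}$. A monomial ideal $J$ is stable if for every monomial $w\in J$ and every $j<m(w)$, the monomial $x_jw/x_{m(w)}$ lies in $J$. $\mathcal G(J)$ is the set of minimal monomial generators of $J$ and $\mathcal G(J)_d$ those of degree $d$. *)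

theory Defs
  imports Main
begin

text \<open>Monomials of k[x_1,...,x_n] are represented by exponent vectors
  a :: nat \<Rightarrow> nat supported in {1..n}; a monomial ideal is represented by
  the set of monomials it contains (which determines it).\<close>

definition monomials :: "nat \<Rightarrow> (nat \<Rightarrow> nat) set" where
  "monomials n = {a. \<forall>j. 0 < a j \<longrightarrow> j \<in> {1..n}}"

definition mdvd :: "(nat \<Rightarrow> nat) \<Rightarrow> (nat \<Rightarrow> nat) \<Rightarrow> bool" where
  "mdvd a b \<longleftrightarrow> (\<forall>j. a j \<le> b j)"

definition mmult :: "(nat \<Rightarrow> nat) \<Rightarrow> (nat \<Rightarrow> nat) \<Rightarrow> (nat \<Rightarrow> nat)" where
  "mmult a b = (\<lambda>j. a j + b j)"

definition var :: "nat \<Rightarrow> (nat \<Rightarrow> nat)" where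
  "var i = (\<lambda>j. if j = i then 1 else 0)"

definition mdeg :: "nat \<Rightarrow> (nat \<Rightarrow> nat) \<Rightarrow> nat" where
  "mdeg n a = (\<Sum>j\<in>{1..n}. a j)"

definition mmax :: "(nat \<Rightarrow> nat) \<Rightarrow> nat" where
  "mmax u = Max {j. 0 < u j}"

definition monomial_ideal :: "nat \<Rightarrow> (nat \<Rightarrow> nat) set \<Rightarrow> bool" where
  "monomial_ideal n J \<longleftrightarrow> J \<subseteq> monomials n \<and>
     (\<forall>u\<in>J. \<forall>v\<in>monomials n. mdvd u v \<longrightarrow> v \<in> J)"

text \<open>Stable: for every monomial w in J and every j < m(w), x_j w / x_{m(w)} \<in> J
  (vacuous for w = 1, which has no variables).\<close>
definition stable :: "nat \<Rightarrow> (nat \<Rightarrow> nat) set \<Rightarrow> bool" where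
  "stable n J \<longleftrightarrow> (\<forall>w\<in>J. {j. 0 < w j} \<noteq> {} \<longrightarrow>
     (\<forall>j. 1 \<le> j \<and> j < mmax w \<longrightarrow>
        (w(j := w j + 1, mmax w := w (mmax w) - 1)) \<in> J))"

definition mingens :: "(nat \<Rightarrow> nat) set \<Rightarrow> (nat \<Rightarrow> nat) set" where
  "mingens J = {u\<in>J. \<forall>v\<in>J. mdvd v u \<longrightarrow> v = u}"

definition colon :: "nat \<Rightarrow> (nat \<Rightarrow> nat) set \<Rightarrow> nat \<Rightarrow> (nat \<Rightarrow> nat) set" where
  "colon n J i = {u\<in>monomials n. mmult (var i) u \<in> J}"

end

theory Submission
  imports Defs
begin

text \<open>If \<open>T \<in> (J : x\<^sub>n) \<setminus> J\<close>, then \<open>x\<^sub>n T\<close> is a minimal generator of \<open>J\<close>: a proper divisor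
  \<open>V \<in> J\<close> of \<open>x\<^sub>n T\<close> either already divides \<open>T\<close>, or it has the full \<open>x\<^sub>n\<close>-degree of \<open>x\<^sub>n T\<close> and
  a smaller \<open>x\<^sub>j\<close>-degree than \<open>T\<close> for some \<open>j < n\<close>; then stability exchanges one \<open>x\<^sub>n\<close> of \<open>V\<close> for that
  \<open>x\<^sub>j\<close> and produces an element of \<open>J\<close> dividing \<open>T\<close>. Conversely, dividing a minimal
  generator by \<open>x\<^sub>n\<close> leaves \<open>J\<close> but stays in \<open>J : x\<^sub>n\<close>. Multiplication by \<open>x\<^sub>n\<close> is
  injective and raises the degree by one, which gives the bijection.\<close>

lemma monomial_idealD:
  assumes "monomial_ideal n J"
  shows "J \<subseteq> monomials n"
    and "u \<in> J \<Longrightarrow> v \<in> monomials n \<Longrightarrow> mdvd u v \<Longrightarrow> v \<in> J"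
  using assms by (auto simp: monomial_ideal_def)

lemma mmult_var_apply: "mmult (var i) T j = (if j = i then T j + 1 else T j)"
  by (simp add: mmult_def var_def)

lemma inj_mmult_var: "inj (mmult (var i))"
  by (rule injI) (simp add: mmult_def fun_eq_iff)

lemma mdeg_mmult_var:
  assumes "i \<in> {1..n}"
  shows "mdeg n (mmult (var i) T) = mdeg n T + 1"
proof -
  have "mdeg n (mmult (var i) T) = (\<Sum>j\<in>{1..n}. var i j) + mdeg n T"
    by (simp add: mdeg_def mmult_def sum.distrib)
  moreover have "(\<Sum>j\<in>{1..n}. var i j) = 1"
    using assms by (simp add: var_def)
  ultimately show ?thesis by simp
qed

lemma mmax_eq_last:
  assumes "u \<in> monomials n" and "0 < u n"
  shows "mmax u = n"
  unfolding mmax_def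
proof (rule Max_eqI)
  have "{j. 0 < u j} \<subseteq> {1..n}"
    using assms(1) by (auto simp: monomials_def)
  then show "finite {j. 0 < u j}"
    by (rule finite_subset) simp
qed (use assms in \<open>auto simp: monomials_def\<close>)

lemma stable_exchange_last:
  assumes "stable n J" and "J \<subseteq> monomials n"
    and "u \<in> J" and "0 < u n" and "1 \<le> j" and "j < n"
  shows "u(j := u j + 1, n := u n - 1) \<in> J"
proof -
  have "mmax u = n"
    using assms(2-4) by (blast intro: mmax_eq_last)
  with assms show ?thesis
    unfolding stable_def by fastforce
qed

lemma stable_proper_divisor_mmult_var:
  assumes "stable n J" and "J \<subseteq> monomials n" and "T \<in> monomials n"
    and "V \<in> J" and "mdvd V (mmult (var n) T)" and "V \<noteq> mmult (var n) T"
  obtains W where "W \<in> J" and "mdvd W T"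
proof -
  have Vle: "V i \<le> (if i = n then T i + 1 else T i)" for i
    using assms(5) by (simp add: mdvd_def mmult_var_apply)
  show thesis
  proof (cases "V n \<le> T n")
    case True
    have "mdvd V T"
      unfolding mdvd_def
    proof
      fix i
      show "V i \<le> T i"
        using Vle[of i] True by (cases "i = n") auto
    qed
    with assms(4) show thesis
      by (rule that)
  next
    case False
    then have Vn: "V n = T n + 1"
      using Vle[of n] by simp
    obtain j where "V j \<noteq> mmult (var n) T j"
      using assms(6) by auto
    then have jn: "j \<noteq> n" and Vj: "V j < T j"
      using Vn Vle[of j] by (auto simp: mmult_var_apply split: if_splits)
    then have "j \<in> {1..n}"
      using assms(3) by (simp add: monomials_def)
    then have "V(j := V j + 1, n := V n - 1) \<in> J"
      using stable_exchange_last[OF assms(1,2,4)] Vn jn by simp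
    moreover have "mdvd (V(j := V j + 1, n := V n - 1)) T"
      unfolding mdvd_def
    proof
      fix i
      show "(V(j := V j + 1, n := V n - 1)) i \<le> T i"
        using Vle[of i] Vn Vj jn by auto
    qed
    ultimately show thesis
      by (rule that)
  qed
qed

lemma mmult_var_in_mingens:
  assumes J: "monomial_ideal n J" and "stable n J"
    and T: "T \<in> colon n J n" "T \<notin> J"
  shows "mmult (var n) T \<in> mingens J"
  unfolding mingens_def
proof (intro CollectI conjI ballI impI)
  show "mmult (var n) T \<in> J"
    using T(1) by (simp add: colon_def)
  have Tm: "T \<in> monomials n"
    using T(1) by (simp add: colon_def)
  fix V assume "V \<in> J" and "mdvd V (mmult (var n) T)"
  show "V = mmult (var n) T"
  proof (rule ccontr)
    assume "V \<noteq> mmult (var n) T"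
    then obtain W where "W \<in> J" and "mdvd W T"
      using stable_proper_divisor_mmult_var[OF \<open>stable n J\<close> monomial_idealD(1)[OF J] Tm]
        \<open>V \<in> J\<close> \<open>mdvd V (mmult (var n) T)\<close> by blast
    then show False
      using monomial_idealD(2)[OF J _ Tm] T(2) by blast
  qed
qed

lemma mingens_div_var:
  assumes J: "monomial_ideal n J" and U: "U \<in> mingens J" "0 < U i"
  shows "U(i := U i - 1) \<in> colon n J i" and "U(i := U i - 1) \<notin> J"
    and "mmult (var i) (U(i := U i - 1)) = U"
proof -
  let ?T = "U(i := U i - 1)"
  show UT: "mmult (var i) ?T = U"
    using U(2) by (auto simp: mmult_var_apply)
  have "U \<in> monomials n"
    using monomial_idealD(1)[OF J] U(1) by (auto simp: mingens_def)
  then have "?T \<in> monomials n"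
    by (simp add: monomials_def)
  then show "?T \<in> colon n J i"
    using U(1) UT by (simp add: colon_def mingens_def)
  show "?T \<notin> J"
  proof
    assume "?T \<in> J"
    moreover have "mdvd ?T U"
      by (simp add: mdvd_def)
    ultimately have "?T = U"
      using U(1) by (simp add: mingens_def)
    then have "U i - 1 = U i"
      by (metis fun_upd_same)
    with U(2) show False
      by simp
  qed
qed

theorem lemma3p8:
  fixes n d :: nat and J :: "(nat \<Rightarrow> nat) set"
  assumes "1 \<le> n" and "monomial_ideal n J" and "stable n J" and "1 \<le> d"
  shows "(mmult (var n) ` {T\<in>colon n J n. T \<notin> J \<and> mdeg n T = d - 1}
           = {T\<in>mingens J. mdeg n T = d \<and> 0 < T n}) \<and>
         card {T\<in>colon n J n. T \<notin> J \<and> mdeg n T = d - 1}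
           = card {T\<in>mingens J. mdeg n T = d \<and> 0 < T n}"
proof -
  let ?S = "{T\<in>colon n J n. T \<notin> J \<and> mdeg n T = d - 1}"
  have deg: "mdeg n (mmult (var n) T) = mdeg n T + 1" for T
    using assms(1) by (simp add: mdeg_mmult_var)
  have "mmult (var n) T \<in> {T\<in>mingens J. mdeg n T = d \<and> 0 < T n}" if "T \<in> ?S" for T
    using that mmult_var_in_mingens[OF assms(2,3)] deg[of T] assms(4)
    by (simp add: mmult_var_apply)
  then have "mmult (var n) ` ?S \<subseteq> {T\<in>mingens J. mdeg n T = d \<and> 0 < T n}"
    by blast
  moreover have "{T\<in>mingens J. mdeg n T = d \<and> 0 < T n} \<subseteq> mmult (var n) ` ?S"
  proof
    fix U assume U: "U \<in> {T\<in>mingens J. mdeg n T = d \<and> 0 < T n}"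
    let ?T = "U(n := U n - 1)"
    have UT: "mmult (var n) ?T = U"
      using mingens_div_var(3)[OF assms(2)] U by blast
    have "mdeg n ?T = d - 1"
      using U deg[of ?T] UT by simp
    then have "?T \<in> ?S"
      using mingens_div_var(1,2)[OF assms(2)] U by blast
    then show "U \<in> mmult (var n) ` ?S"
      by (rule image_eqI[where f = "mmult (var n)", OF UT[symmetric]])
  qed
  ultimately have eq: "mmult (var n) ` ?S = {T\<in>mingens J. mdeg n T = d \<and> 0 < T n}"
    by (rule subset_antisym)
  moreover have "card (mmult (var n) ` ?S) = card ?S"
    using inj_on_subset[OF inj_mmult_var subset_UNIV] by (rule card_image)
  ultimately show ?thesis
    by argo
qed

end
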